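(* Let $G$ be a graph and let $M$ be a matching in $G$ with parts $U$ and $W$ (so every edge of $M$ joins a vertex of $U$ to a vertex of $W$, and $U\cup W$ is the set of vertices covered by $M$), such that every vertex $w\in W$ has exactly one neighbor in $G$ among the vertices covered by $M$. Suppose that $|N_G(U)\setminus (W\cup N_G(W))|\geq k$. Then $f_o(G)\geq k/4$.
   Context: For a set $S$ of vertices, $N_G(S)=\bigcup_{s\in S}N_G(s)$ is the union of the neighborhoods of the vertices of $S$. For a graph $G$, $f_o(G)$ denotes the maximum of $|V_0|$ over all $V_0\subseteq V(G)$ such that the induced subgraph $G[V_0]$ has all degrees odd. *)

theory Defs
  imports Complex_Main
begin

definition graph :: "'a set \<Rightarrow> ('a \<Rightarrow> 'a \<Rightarrow> bool) \<Rightarrow> bool" where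
  "graph V E \<longleftrightarrow> finite V \<and> (\<forall>u v. E u v \<longrightarrow> E v u) \<and> (\<forall>v. \<not> E v v)
     \<and> (\<forall>u v. E u v \<longrightarrow> u \<in> V \<and> v \<in> V)"

definition nbhd :: "'a set \<Rightarrow> ('a \<Rightarrow> 'a \<Rightarrow> bool) \<Rightarrow> 'a set \<Rightarrow> 'a set" where
  "nbhd V E S = {v \<in> V. \<exists>s\<in>S. E s v}"

definition all_odd :: "('a \<Rightarrow> 'a \<Rightarrow> bool) \<Rightarrow> 'a set \<Rightarrow> bool" where
  "all_odd E S \<longleftrightarrow> (\<forall>v\<in>S. odd (card {u \<in> S. E v u}))"

definition f_o :: "'a set \<Rightarrow> ('a \<Rightarrow> 'a \<Rightarrow> bool) \<Rightarrow> nat" where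
  "f_o V E = Max {card S | S. S \<subseteq> V \<and> all_odd E S}"

text \<open>A matching with parts U and W, encoded as a set of oriented edges (u,w)
with u the endpoint in U and w the endpoint in W; distinct edges are vertex-disjoint,
and U, W are exactly the sets of such endpoints (so U \<union> W is the set of covered vertices).\<close>
definition matching_parts ::
  "('a \<Rightarrow> 'a \<Rightarrow> bool) \<Rightarrow> ('a \<times> 'a) set \<Rightarrow> 'a set \<Rightarrow> 'a set \<Rightarrow> bool" where
  "matching_parts E M U W \<longleftrightarrow>
     (\<forall>(u,w)\<in>M. E u w)
   \<and> (\<forall>e\<in>M. \<forall>e'\<in>M. e \<noteq> e' \<longrightarrow> {fst e, snd e} \<inter> {fst e', snd e'} = {})
   \<and> U = fst ` M \<and> W = snd ` M"

end

theory Submission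
  imports Defs
begin

(* Let X = N(U) - (W \<union> N(W)). Every x in X has a neighbour in U, so some T \<subseteq> U is met an
   odd number of times by at least half of X. By Gallai's theorem these vertices split into two
   sets each inducing only even degrees; the larger one, Y, has at least |X|/4 vertices. In
   Y \<union> T every y in Y has odd degree, as it has no neighbour in W. A vertex u of T of even degree
   is repaired by adding its matching partner in W: that partner sees no vertex of Y and no
   covered vertex other than u, so it changes only the degree of u and has degree one itself. *)

definition all_even :: "('a \<Rightarrow> 'a \<Rightarrow> bool) \<Rightarrow> 'a set \<Rightarrow> bool" where
  "all_even E S \<longleftrightarrow> (\<forall>v\<in>S. even (card {u \<in> S. E v u}))"

definition complement_on :: "'a set \<Rightarrow> ('a \<Rightarrow> 'a \<Rightarrow> bool) \<Rightarrow> 'a \<Rightarrow> 'a \<Rightarrow> bool" where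
  "complement_on N E x z \<longleftrightarrow> (if x \<in> N \<and> z \<in> N \<and> x \<noteq> z then \<not> E x z else E x z)"

lemma card_complement_on_plus_card:
  assumes "finite S" "y \<in> N" "\<not> E y y"
  shows "card {z\<in>S. complement_on N E y z} + card {z\<in>S. E y z}
         = 2 * card {z\<in>S - N. E y z} + card (S \<inter> N - {y})"
proof -
  define Q where "Q = {z\<in>S - N. E y z}"
  define P1 where "P1 = {z\<in>S \<inter> N - {y}. \<not> E y z}"
  define P2 where "P2 = {z\<in>S \<inter> N - {y}. E y z}"
  have fin: "finite Q" "finite P1" "finite P2"
    using assms(1) unfolding Q_def P1_def P2_def by auto
  have "{z\<in>S. complement_on N E y z} = Q \<union> P1" "{z\<in>S. E y z} = Q \<union> P2"
    "S \<inter> N - {y} = P1 \<union> P2"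
    using assms(2,3) unfolding Q_def P1_def P2_def complement_on_def by auto
  moreover have "Q \<inter> P1 = {}" "Q \<inter> P2 = {}" "P1 \<inter> P2 = {}"
    unfolding Q_def P1_def P2_def by auto
  ultimately show ?thesis
    using fin unfolding Q_def[symmetric] by (simp add: card_Un_disjoint)
qed

lemma even_degree_of_complement_on:
  assumes "finite S" "y \<in> S" "\<not> E y y" "even (card {z\<in>S. complement_on N E y z})"
  shows "even (card {z\<in>S. E y z}) \<longleftrightarrow> y \<notin> N \<or> odd (card (S \<inter> N))"
proof (cases "y \<in> N")
  case True
  have "card (S \<inter> N) = Suc (card (S \<inter> N - {y}))"
    using True assms(1,2) by (metis IntI card_Suc_Diff1 finite_Int)
  moreover have "even (card {z\<in>S. complement_on N E y z} + card {z\<in>S. E y z})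
      \<longleftrightarrow> even (card (S \<inter> N - {y}))"
    unfolding card_complement_on_plus_card[of S y N E, OF assms(1) True assms(3)] by simp
  ultimately show ?thesis
    using assms(4) True by simp
next
  case False
  then have "{z\<in>S. complement_on N E y z} = {z\<in>S. E y z}"
    unfolding complement_on_def by auto
  then show ?thesis using False assms(4) by simp
qed

lemma all_even_of_complement_on:
  assumes "finite B" "\<forall>x. \<not> E x x" "all_even (complement_on N E) B" "odd (card (B \<inter> N))"
  shows "all_even E B"
  using assms even_degree_of_complement_on[of B _ E N] unfolding all_even_def by blast

lemma all_even_insert_of_complement_on:
  assumes "finite A" "\<forall>x y. E x y \<longrightarrow> E y x" "\<forall>x. \<not> E x x" "v \<notin> A"
    and "\<forall>x\<in>A. E v x \<longleftrightarrow> x \<in> N" "all_even (complement_on N E) A" "even (card (A \<inter> N))"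
  shows "all_even E (insert v A)"
  unfolding all_even_def
proof
  fix y assume "y \<in> insert v A"
  then consider "y = v" | "y \<in> A" by blast
  then show "even (card {u \<in> insert v A. E y u})"
  proof cases
    case 1
    then have "{u \<in> insert v A. E y u} = A \<inter> N" using assms(3,5) by auto
    then show ?thesis using assms(7) by simp
  next
    case 2
    have "{u \<in> insert v A. E y u} = (if y \<in> N then insert v else id) {u \<in> A. E y u}"
      using 2 assms(2,4,5) by auto
    moreover have "even (card {u\<in>A. E y u}) \<longleftrightarrow> y \<notin> N"
      using even_degree_of_complement_on[OF assms(1) 2] assms(3,6,7) 2
      unfolding all_even_def by blast
    ultimately show ?thesis using assms(1,4) by auto
  qed
qed

(* Gallai: delete a vertex v of odd degree and complement the graph inside its neighbourhood N;
   in a partition of the smaller graph one part meets N evenly, and that part can take v back. *)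
lemma gallai_even_partition:
  assumes "finite V" "\<forall>x y. E x y \<longrightarrow> E y x" "\<forall>x. \<not> E x x"
  shows "\<exists>A B. A \<union> B = V \<and> A \<inter> B = {} \<and> all_even E A \<and> all_even E B"
  using assms
proof (induction "card V" arbitrary: V E rule: less_induct)
  case less
  show ?case
  proof (cases "all_even E V")
    case True
    then show ?thesis by (intro exI[of _ V] exI[of _ "{}"]) (auto simp: all_even_def)
  next
    case False
    then obtain v where v: "v \<in> V" "odd (card {u\<in>V. E v u})"
      unfolding all_even_def by auto
    define N where "N = {u\<in>V. E v u}"
    define E' where "E' = complement_on N E"
    have "\<forall>x y. E' x y \<longrightarrow> E' y x" "\<forall>x. \<not> E' x x"
      using less.prems unfolding E'_def complement_on_def by auto
    moreover have "card (V - {v}) < card V"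
      using v less.prems(1) by (intro card_Diff1_less)
    ultimately obtain A' B' where AB': "A' \<union> B' = V - {v}" "A' \<inter> B' = {}"
      "all_even E' A'" "all_even E' B'"
      using less.hyps[of "V - {v}" E'] less.prems(1) by auto
    have N_v: "\<forall>x\<in>V. E v x \<longleftrightarrow> x \<in> N"
      unfolding N_def by auto
    have fin: "finite A'" "finite B'"
      using AB'(1) less.prems(1) by (metis finite_Diff finite_Un)+
    have "N = (A' \<inter> N) \<union> (B' \<inter> N)"
      using AB'(1) less.prems(3) unfolding N_def by auto
    also have "card \<dots> = card (A' \<inter> N) + card (B' \<inter> N)"
      using fin AB'(2) by (intro card_Un_disjoint) auto
    finally have "card N = card (A' \<inter> N) + card (B' \<inter> N)" .
    then consider "even (card (A' \<inter> N))" "odd (card (B' \<inter> N))"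
      | "even (card (B' \<inter> N))" "odd (card (A' \<inter> N))"
      using v(2) N_def by fastforce
    moreover have "\<exists>A B. A \<union> B = V \<and> A \<inter> B = {} \<and> all_even E A \<and> all_even E B"
      if "A \<union> B = V - {v}" "A \<inter> B = {}" "finite A" "finite B"
        "all_even E' A" "all_even E' B" "even (card (A \<inter> N))" "odd (card (B \<inter> N))" for A B
    proof (rule exI[of _ "insert v A"], rule exI[of _ B], intro conjI)
      show "insert v A \<union> B = V" "insert v A \<inter> B = {}"
        using that(1,2) v(1) by auto
      show "all_even E (insert v A)"
        using all_even_insert_of_complement_on[OF that(3) less.prems(2,3)] N_v that E'_def by auto
      show "all_even E B"
        using all_even_of_complement_on[of B E N] that(4,6,8) less.prems(3) E'_def by auto
    qed
    ultimately show ?thesis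
      using AB' fin by (metis Int_commute Un_commute)
  qed
qed

lemma exists_all_even_half:
  assumes "finite S" "\<forall>x y. E x y \<longrightarrow> E y x" "\<forall>x. \<not> E x x"
  shows "\<exists>Y\<subseteq>S. all_even E Y \<and> card S \<le> 2 * card Y"
proof -
  obtain A B where AB: "A \<union> B = S" "A \<inter> B = {}" "all_even E A" "all_even E B"
    using gallai_even_partition[OF assms] by blast
  have "card S = card A + card B"
    using AB(1,2) assms(1) by (metis card_Un_disjoint finite_Un)
  then consider "card S \<le> 2 * card A" | "card S \<le> 2 * card B"
    by linarith
  then show ?thesis
    using AB by (metis Un_upper1 Un_upper2)
qed

lemma card_Collect_insert:
  assumes "finite T" "u \<notin> T" "P u"
  shows "card {v\<in>insert u T. P v} = Suc (card {v\<in>T. P v})"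
proof -
  have "{v\<in>insert u T. P v} = insert u {v\<in>T. P v}"
    using assms(3) by auto
  then show ?thesis
    using assms(1,2) by simp
qed

lemma card_Collect_split:
  assumes "finite X" "Z \<subseteq> X"
  shows "card {x\<in>X. P x} = card {x\<in>X - Z. P x} + card {x\<in>Z. P x}"
proof -
  have "{x\<in>X. P x} = {x\<in>X - Z. P x} \<union> {x\<in>Z. P x}"
    using assms(2) by auto
  also have "card \<dots> = card {x\<in>X - Z. P x} + card {x\<in>Z. P x}"
    using assms by (intro card_Un_disjoint) (auto intro: finite_subset)
  finally show ?thesis .
qed

(* Adding u to T flips the parity exactly at the vertices related to u, so T or insert u T
   works for at least half of them. *)
lemma exists_odd_degree_half:
  assumes "finite U" "finite X" "\<forall>x\<in>X. \<exists>u\<in>U. R x u"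
  shows "\<exists>T\<subseteq>U. card X \<le> 2 * card {x\<in>X. odd (card {u\<in>T. R x u})}"
  using assms
proof (induction U arbitrary: X rule: finite_induct)
  case empty
  then show ?case by auto
next
  case (insert u U)
  let ?odd_in = "\<lambda>T Z. {x\<in>Z. odd (card {v\<in>T. R x v})}"
  define Xu where "Xu = {x\<in>X. R x u}"
  have Xu: "finite Xu" "Xu \<subseteq> X"
    using insert.prems(1) unfolding Xu_def by auto
  have "\<forall>x\<in>X - Xu. \<exists>u\<in>U. R x u"
    using insert.prems(2) unfolding Xu_def by auto
  then obtain T where T: "T \<subseteq> U" "card (X - Xu) \<le> 2 * card (?odd_in T (X - Xu))"
    using insert.IH insert.prems(1) by blast
  have "finite T" "u \<notin> T"
    using T(1) insert.hyps finite_subset by blast+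
  then have flip: "odd (card {v\<in>insert u T. R x v}) \<longleftrightarrow> \<not> odd (card {v\<in>T. R x v})"
    if "x \<in> Xu" for x
    using that card_Collect_insert[of T u "R x"] unfolding Xu_def by simp
  have "Xu = ?odd_in T Xu \<union> ?odd_in (insert u T) Xu"
    using flip by auto
  also have "card \<dots> = card (?odd_in T Xu) + card (?odd_in (insert u T) Xu)"
    using Xu(1) flip by (intro card_Un_disjoint) auto
  finally have "card Xu = card (?odd_in T Xu) + card (?odd_in (insert u T) Xu)" .
  moreover have "{v\<in>insert u T. R x v} = {v\<in>T. R x v}" if "x \<in> X - Xu" for x
    using that unfolding Xu_def by auto
  then have "card (?odd_in (insert u T) (X - Xu)) = card (?odd_in T (X - Xu))"
    by (intro arg_cong[where f = card]) auto
  moreover have "card X = card (X - Xu) + card Xu"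
    using card_Collect_split[OF insert.prems(1) Xu(2), of "\<lambda>_. True"] by (simp add: set_diff_eq)
  ultimately have "card X \<le> 2 * card (?odd_in T X) \<or> card X \<le> 2 * card (?odd_in (insert u T) X)"
    using T(2) card_Collect_split[OF insert.prems(1) Xu(2), of "\<lambda>x. odd (card {v\<in>T. R x v})"]
      card_Collect_split[OF insert.prems(1) Xu(2), of "\<lambda>x. odd (card {v\<in>insert u T. R x v})"]
    by linarith
  then show ?case
    using T(1) by blast
qed

lemma exists_all_even_odd_degree_quarter:
  assumes "finite U" "finite X" "\<forall>x y. E x y \<longrightarrow> E y x" "\<forall>x. \<not> E x x"
    and "\<forall>x\<in>X. \<exists>u\<in>U. E x u"
  shows "\<exists>T\<subseteq>U. \<exists>Y\<subseteq>X. all_even E Y \<and> (\<forall>y\<in>Y. odd (card {u\<in>T. E y u})) \<and> card X \<le> 4 * card Y"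
proof -
  obtain T where T: "T \<subseteq> U" "card X \<le> 2 * card {x\<in>X. odd (card {u\<in>T. E x u})}"
    using exists_odd_degree_half[OF assms(1,2,5)] by blast
  have "finite {x\<in>X. odd (card {u\<in>T. E x u})}"
    using assms(2) by simp
  then obtain Y where Y: "Y \<subseteq> {x\<in>X. odd (card {u\<in>T. E x u})}" "all_even E Y"
    "card {x\<in>X. odd (card {u\<in>T. E x u})} \<le> 2 * card Y"
    using exists_all_even_half[OF _ assms(3,4)] by auto
  then have "Y \<subseteq> X" "\<forall>y\<in>Y. odd (card {u\<in>T. E y u})" "card X \<le> 4 * card Y"
    using T(2) by auto
  then show ?thesis
    using T(1) Y(2) by blast
qed

lemma card_le_f_o:
  assumes "finite V" "S \<subseteq> V" "all_odd E S"
  shows "card S \<le> f_o V E"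
proof -
  have "{card S | S. S \<subseteq> V \<and> all_odd E S} \<subseteq> card ` Pow V"
    by auto
  then have "finite {card S | S. S \<subseteq> V \<and> all_odd E S}"
    using assms(1) by (meson finite_Pow_iff finite_imageI finite_subset)
  then show ?thesis
    unfolding f_o_def using assms(2,3) by (auto intro: Max_ge)
qed

lemma matching_parts_subset:
  assumes "graph V E" "matching_parts E M U W"
  shows "U \<subseteq> V" "W \<subseteq> V"
  using assms unfolding graph_def matching_parts_def by force+

lemma matching_parts_disjoint:
  assumes "\<forall>x. \<not> E x x" "matching_parts E M U W"
  shows "U \<inter> W = {}"
proof (rule ccontr)
  assume "U \<inter> W \<noteq> {}"
  then obtain e e' where e: "e \<in> M" "e' \<in> M" "fst e = snd e'"
    using assms(2) unfolding matching_parts_def by auto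
  have "E (fst e) (snd e)"
    using assms(2) e(1) unfolding matching_parts_def by (cases e) auto
  then have "e \<noteq> e'"
    using assms(1) e(3) by auto
  then show False
    using e assms(2) unfolding matching_parts_def by blast
qed

lemma matching_parts_partner:
  assumes "matching_parts E M U W"
  obtains p where "\<forall>u\<in>U. p u \<in> W \<and> E u (p u)"
proof -
  have "\<forall>u\<in>U. \<exists>w. (u, w) \<in> M"
    using assms unfolding matching_parts_def by fastforce
  then obtain p where p: "\<forall>u\<in>U. (u, p u) \<in> M"
    by (metis bchoice)
  have "p u \<in> W \<and> E u (p u)" if "u \<in> U" for u
  proof -
    have "(u, p u) \<in> M"
      using p that by blast
    then have "p u \<in> snd ` M" "E u (p u)"
      using assms unfolding matching_parts_def by force+
    then show ?thesis
      using assms unfolding matching_parts_def by simp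
  qed
  then show thesis
    using that by blast
qed

lemma card_Collect_eq_1_unique:
  assumes "card {x\<in>A. P x} = 1" "a \<in> A" "b \<in> A" "P a" "P b"
  shows "a = b"
proof -
  obtain q where q: "{x\<in>A. P x} = {q}"
    using assms(1) card_1_singletonE by blast
  have "a \<in> {x\<in>A. P x}" "b \<in> {x\<in>A. P x}"
    using assms(2-5) by simp_all
  then show ?thesis
    unfolding q by simp
qed

context
  fixes E :: "'a \<Rightarrow> 'a \<Rightarrow> bool" and Y T W :: "'a set" and p :: "'a \<Rightarrow> 'a"
  assumes sym: "\<forall>x y. E x y \<longrightarrow> E y x"
    and finite_YT: "finite Y" "finite T"
    and disjoint: "Y \<inter> (T \<union> W) = {}" "T \<inter> W = {}"
    and no_edge_Y_W: "\<forall>y\<in>Y. \<forall>w\<in>W. \<not> E y w"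
    and partner: "\<forall>u\<in>T. p u \<in> W \<and> E u (p u)"
    and unique_neighbour: "\<forall>w\<in>W. \<forall>a\<in>T \<union> W. \<forall>b\<in>T \<union> W. E w a \<longrightarrow> E w b \<longrightarrow> a = b"
begin

lemma card_neighbours_in_partner_extension_of_Y:
  assumes "y \<in> Y" "T' \<subseteq> T"
  shows "card {z \<in> Y \<union> T \<union> p ` T'. E y z} = card {z\<in>Y. E y z} + card {z\<in>T. E y z}"
proof -
  have "{z \<in> Y \<union> T \<union> p ` T'. E y z} = {z\<in>Y. E y z} \<union> {z\<in>T. E y z}"
    using assms no_edge_Y_W partner by blast
  then show ?thesis
    using finite_YT disjoint(1) by (simp add: card_Un_disjoint disjoint_iff)
qed

lemma card_neighbours_in_partner_extension_of_T:
  assumes "u \<in> T" "T' \<subseteq> T"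
  shows "card {z \<in> Y \<union> T \<union> p ` T'. E u z} = card {z\<in>Y \<union> T. E u z} + (if u \<in> T' then 1 else 0)"
proof -
  have "u' = u" if "u' \<in> T'" "E u (p u')" for u'
  proof -
    have "u' \<in> T"
      using that(1) assms(2) by blast
    then have "p u' \<in> W" "E (p u') u'" "E (p u') u"
      using partner sym that(2) by blast+
    then show ?thesis
      using unique_neighbour assms(1) \<open>u' \<in> T\<close> by blast
  qed
  then have "{z \<in> p ` T'. E u z} = (if u \<in> T' then {p u} else {})"
    using assms(1) partner by auto
  moreover have "{z \<in> Y \<union> T \<union> p ` T'. E u z} = {z\<in>Y \<union> T. E u z} \<union> {z \<in> p ` T'. E u z}"
    by auto
  moreover have "{z\<in>Y \<union> T. E u z} \<inter> {z \<in> p ` T'. E u z} = {}"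
    using disjoint partner assms(2) by blast
  ultimately show ?thesis
    using finite_YT by (simp add: card_Un_disjoint)
qed

lemma neighbours_in_partner_extension_of_partner:
  assumes "u \<in> T'" "T' \<subseteq> T"
  shows "{z \<in> Y \<union> T \<union> p ` T'. E (p u) z} = {u}"
proof -
  have "p u \<in> W" "E (p u) u"
    using assms partner sym by auto
  moreover have "z \<notin> Y" if "E (p u) z" for z
    using that \<open>p u \<in> W\<close> no_edge_Y_W sym by blast
  ultimately show ?thesis
    using assms unique_neighbour partner by blast
qed

lemma all_odd_partner_extension:
  assumes "all_even E Y" "\<forall>y\<in>Y. odd (card {u\<in>T. E y u})"
  shows "all_odd E (Y \<union> T \<union> p ` {u\<in>T. even (card {z\<in>Y \<union> T. E u z})})"
  unfolding all_odd_def
proof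
  define T' where "T' = {u\<in>T. even (card {z\<in>Y \<union> T. E u z})}"
  have "T' \<subseteq> T"
    unfolding T'_def by auto
  fix x assume "x \<in> Y \<union> T \<union> p ` T'"
  then consider "x \<in> Y" | "x \<in> T" | u where "u \<in> T'" "x = p u"
    by blast
  then show "odd (card {z \<in> Y \<union> T \<union> p ` T'. E x z})"
  proof cases
    case 1
    then show ?thesis
      using assms card_neighbours_in_partner_extension_of_Y[OF 1 \<open>T' \<subseteq> T\<close>]
      unfolding all_even_def by auto
  next
    case 2
    then show ?thesis
      using card_neighbours_in_partner_extension_of_T[OF 2 \<open>T' \<subseteq> T\<close>]
      unfolding T'_def by auto
  next
    case 3
    then show ?thesis
      using neighbours_in_partner_extension_of_partner[OF 3(1) \<open>T' \<subseteq> T\<close>] by simp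
  qed
qed

end

lemma matching_parts_odd_extension:
  assumes "graph V E" "matching_parts E M U W"
    and "\<forall>w\<in>W. card {x \<in> U \<union> W. E w x} = 1"
    and "Y \<subseteq> nbhd V E U - (W \<union> nbhd V E W)" "T \<subseteq> U"
    and "all_even E Y" "\<forall>y\<in>Y. odd (card {u\<in>T. E y u})"
  shows "\<exists>S\<subseteq>V. Y \<subseteq> S \<and> all_odd E S"
proof -
  have finite_V: "finite V" and sym: "\<forall>x y. E x y \<longrightarrow> E y x" and irrefl: "\<forall>x. \<not> E x x"
    using assms(1) unfolding graph_def by auto
  have UW_V: "U \<subseteq> V" "W \<subseteq> V" and UW_disjoint: "U \<inter> W = {}"
    using matching_parts_subset[OF assms(1,2)] matching_parts_disjoint[OF irrefl assms(2)] by auto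
  obtain p where p: "\<forall>u\<in>U. p u \<in> W \<and> E u (p u)"
    using matching_parts_partner[OF assms(2)] by blast
  have Y_V: "Y \<subseteq> V"
    using assms(4) unfolding nbhd_def by blast
  have fin_YT: "finite Y" "finite T"
    using finite_subset[OF Y_V finite_V] finite_subset[OF assms(5) finite_subset[OF UW_V(1) finite_V]]
    by auto
  have "all_odd E (Y \<union> T \<union> p ` {u\<in>T. even (card {z\<in>Y \<union> T. E u z})})"
  proof (rule all_odd_partner_extension[OF sym fin_YT])
    show "\<forall>y\<in>Y. \<forall>w\<in>W. \<not> E y w"
    proof (intro ballI notI)
      fix y w assume "y \<in> Y" "w \<in> W" "E y w"
      then have "y \<in> nbhd V E W"
        using Y_V sym unfolding nbhd_def by blast
      then show False
        using assms(4) \<open>y \<in> Y\<close> by blast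
    qed
    moreover show "\<forall>u\<in>T. p u \<in> W \<and> E u (p u)"
      using p assms(5) by blast
    ultimately show "Y \<inter> (T \<union> W) = {}" "T \<inter> W = {}"
      using assms(4,5) UW_disjoint by blast+
    show "\<forall>w\<in>W. \<forall>a\<in>T \<union> W. \<forall>b\<in>T \<union> W. E w a \<longrightarrow> E w b \<longrightarrow> a = b"
    proof (intro ballI impI)
      fix w a b assume "w \<in> W" "a \<in> T \<union> W" "b \<in> T \<union> W" "E w a" "E w b"
      then show "a = b"
        using card_Collect_eq_1_unique[of "U \<union> W" "E w" a b] assms(3,5) by blast
    qed
  qed (use assms(6,7) in auto)
  moreover have "Y \<union> T \<union> p ` {u\<in>T. even (card {z\<in>Y \<union> T. E u z})} \<subseteq> V"
    using Y_V UW_V assms(5) p by blast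
  ultimately show ?thesis
    by blast
qed

theorem lemma2p3:
  fixes V :: "'a set" and E :: "'a \<Rightarrow> 'a \<Rightarrow> bool"
    and M :: "('a \<times> 'a) set" and U W :: "'a set" and k :: real
  assumes "graph V E"
    and "matching_parts E M U W"
    and "\<forall>w\<in>W. card {x \<in> U \<union> W. E w x} = 1"
    and "real (card (nbhd V E U - (W \<union> nbhd V E W))) \<ge> k"
  shows "real (f_o V E) \<ge> k / 4"
proof -
  define X where "X = nbhd V E U - (W \<union> nbhd V E W)"
  have finite_V: "finite V" and sym: "\<forall>x y. E x y \<longrightarrow> E y x" and irrefl: "\<forall>x. \<not> E x x"
    using assms(1) unfolding graph_def by auto
  have UX_V: "U \<subseteq> V" "X \<subseteq> V"
    using matching_parts_subset[OF assms(1,2)] unfolding X_def nbhd_def by blast+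
  have "\<forall>x\<in>X. \<exists>u\<in>U. E x u"
    using sym unfolding X_def nbhd_def by blast
  then obtain T Y where TY: "T \<subseteq> U" "Y \<subseteq> X" "all_even E Y"
    "\<forall>y\<in>Y. odd (card {u\<in>T. E y u})" "card X \<le> 4 * card Y"
    using exists_all_even_odd_degree_quarter[OF finite_subset[OF UX_V(1) finite_V]
        finite_subset[OF UX_V(2) finite_V] sym irrefl] by blast
  then obtain S where S: "S \<subseteq> V" "Y \<subseteq> S" "all_odd E S"
    using matching_parts_odd_extension[OF assms(1-3) _ TY(1,3,4)] unfolding X_def by blast
  have "card X \<le> 4 * card S"
    using TY(5) card_mono[OF finite_subset[OF S(1) finite_V] S(2)] by linarith
  also have "card S \<le> f_o V E"
    using card_le_f_o[OF finite_V S(1,3)] .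
  finally show ?thesis
    using assms(4) unfolding X_def by linarith
qed

end
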